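(* Assume $p_0=0$ and the offspring law is of type $(d,\mu)$. There are constants $A>0$ and $\theta\in(0,1)$ such that for all $n\ge1$, $1\le j\le n$, $h\ge0$ and $t\in J_j$, $$\big|f_n(e^{-h/c_n+it})\big|\le\begin{cases}A\,p_1^{\,n-j+1}&\text{in the Schröder case},\\ \theta^{(\mu^{n-j+1})}&\text{in all cases},\end{cases}$$ where $J_j:=\{t\in\mathbb R:\ c_j^{-1}\pi d^{-1}\le|t|\le c_{j-1}^{-1}\pi d^{-1}\}$.
   Context: $Z$ is a supercritical Galton–Watson process with $Z_0=1$ and non-degenerate offspring generating function $f(s)=\sum_{j\ge0}p_js^j$ (extended to the closed complex unit disc), mean $m=f'(1)\in(1,\infty)$; $f_n$ denotes the $n$-th iterate of $f$. Type $(d,\mu)$: $d$ is the gcd of $\{j-\ell:\ j\ne\ell,\ p_jp_\ell>0\}$ and $\mu$ the minimal $j$ with $p_j>0$. Schröder case: $p_0+p_1>0$. $(c_n)_{n\ge0}$ is a fixed sequence of positive constants with $c_0=1$, $c_n<c_{n+1}\le mc_n$, $c_n=m^nL(m^n)$ for some slowly varying $L$ ($c_n=m^n$ if $\mathbf EZ_1\log Z_1<\infty$), such that $c_n^{-1}Z_n\to W$ a.s. for a non-degenerate $W$ whose law on $(0,\infty)$ is absolutely continuous. *)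

theory Defs
  imports "HOL-Probability.Probability"
begin

definition gf :: "(nat \<Rightarrow> real) \<Rightarrow> complex \<Rightarrow> complex" where
  "gf p s = (\<Sum>j. complex_of_real (p j) * s ^ j)"

definition span_d :: "(nat \<Rightarrow> real) \<Rightarrow> nat" where
  "span_d p = Gcd {j - l | j l. l < j \<and> p j * p l > 0}"

definition min_mu :: "(nat \<Rightarrow> real) \<Rightarrow> nat" where
  "min_mu p = (LEAST j. p j > 0)"

text \<open>Galton--Watson process built from offspring variables xi n k
  (number of children of the k-th individual of generation n), Z_0 = 1.\<close>
fun GW :: "(nat \<Rightarrow> nat \<Rightarrow> 'a \<Rightarrow> nat) \<Rightarrow> nat \<Rightarrow> 'a \<Rightarrow> nat" where
  "GW \<xi> 0 \<omega> = 1"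
| "GW \<xi> (Suc n) \<omega> = (\<Sum>k<GW \<xi> n \<omega>. \<xi> n k \<omega>)"

definition slowly_varying :: "(real \<Rightarrow> real) \<Rightarrow> bool" where
  "slowly_varying L \<longleftrightarrow> L \<in> borel_measurable borel \<and> (\<forall>x>0. L x > 0) \<and>
     (\<forall>a>0. ((\<lambda>x. L (a * x) / L x) \<longlongrightarrow> 1) at_top)"

end

theory Submission
  imports Defs
begin

text \<open>Write \<open>w = exp (-h/c\<^sub>n + i t)\<close>. Since \<open>f\<^sub>n = f\<^sub>n\<^sub>-\<^sub>j \<circ> f\<^sub>j\<close> and
  \<open>\<bar>f z\<bar> \<le> g \<bar>z\<bar>\<close> for the real generating function \<open>g\<close>, it suffices to bound
  \<open>\<bar>f\<^sub>j w\<bar>\<close> by one \<open>\<theta>\<^sub>1 < 1\<close> for all \<open>t \<in> J\<^sub>j\<close>, and then to iterate \<open>g\<close> from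
  \<open>\<theta>\<^sub>1\<close>: the bound \<open>g x \<le> x\<^sup>\<mu>\<close> gives \<open>\<theta>\<^sub>1 ^ \<mu> ^ (n - j)\<close>, and in the Schroeder case
  \<open>g x \<le> p\<^sub>1 x + (1 - p\<^sub>1) x\<^sup>2\<close> gives geometric decay at rate \<open>p\<^sub>1\<close>.

  For large \<open>j\<close>, \<open>f\<^sub>j w = E exp (c\<^sub>j (-h/c\<^sub>n + i t) Z\<^sub>j/c\<^sub>j)\<close> with \<open>c\<^sub>j \<bar>t\<bar>\<close> in the
  fixed band \<open>[\<pi>/d, m\<pi>/d]\<close>; as \<open>Z\<^sub>j/c\<^sub>j \<rightarrow> W\<close> almost surely, these transforms converge
  uniformly on compacts to that of \<open>W\<close>, which stays below 1 on the band because \<open>W\<close> has a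
  density on \<open>(0,\<infinity>)\<close>.  For the finitely many small \<open>j\<close>, \<open>\<bar>f\<^sub>j w\<bar> \<le> \<bar>f w\<bar>\<close>
  (as \<open>p\<^sub>0 = 0\<close>) and \<open>\<bar>t\<bar>\<close> ranges over a compact subset of \<open>(0, \<pi>/d]\<close>, where
  \<open>\<bar>f (exp (i t))\<bar> < 1\<close> because the support of the offspring law has span \<open>d\<close>.\<close>

section \<open>Generating functions of the Galton--Watson process\<close>

text \<open>\<open>GW\<close> as a function of the whole offspring array, so that measurability and
  independence can be argued on the restrictions of the array to sets of indices.\<close>

fun gw_size :: "nat \<Rightarrow> (nat \<times> nat \<Rightarrow> nat) \<Rightarrow> nat" where
  "gw_size 0 x = 1"
| "gw_size (Suc n) x = (\<Sum>k<gw_size n x. x (n, k))"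

lemma GW_eq_gw_size: "GW \<xi> n \<omega> = gw_size n (\<lambda>(i, k). \<xi> i k \<omega>)"
  by (induction n) auto

lemma gw_size_restrict:
  assumes "{(i, k). i < n} \<subseteq> K"
  shows "gw_size n (restrict x K) = gw_size n x"
  using assms
proof (induction n)
  case (Suc n)
  then have "{(i, k). i < n} \<subseteq> K" by auto
  with Suc show ?case by (auto intro!: sum.cong)
qed simp

lemma measurable_sum_count_space_nat:
  fixes f :: "nat \<Rightarrow> 'a \<Rightarrow> nat"
  assumes "\<And>k. k \<in> A \<Longrightarrow> f k \<in> measurable M (count_space UNIV)"
  shows "(\<lambda>x. \<Sum>k\<in>A. f k x) \<in> measurable M (count_space UNIV)"
  using assms
proof (induction A rule: infinite_finite_induct)
  case (insert a A)
  have "(\<lambda>x. (f a x, \<Sum>k\<in>A. f k x)) \<in> measurable M (count_space UNIV \<Otimes>\<^sub>M count_space UNIV)"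
    using insert by (intro measurable_Pair) auto
  then have "(\<lambda>x. (f a x, \<Sum>k\<in>A. f k x)) \<in> measurable M (count_space UNIV)"
    by (simp add: pair_measure_countable)
  from measurable_compose[OF this measurable_count_space[of "\<lambda>(a, b). a + b"]]
  show ?case using insert by simp
qed auto

lemma measurable_gw_size:
  assumes "{(i, k). i < n} \<subseteq> K"
  shows "gw_size n \<in> measurable (PiM K (\<lambda>_. count_space UNIV)) (count_space UNIV)"
  using assms
proof (induction n)
  case 0
  have "gw_size 0 = (\<lambda>_. 1)" by auto
  then show ?case by simp
next
  case (Suc n)
  have "(\<lambda>x. (\<lambda>N x. \<Sum>k<N. x (n, k)) (gw_size n x) x)
          \<in> measurable (PiM K (\<lambda>_. count_space UNIV)) (count_space UNIV)"
  proof (rule measurable_compose_countable[OF _ Suc.IH])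
    fix N
    show "(\<lambda>x. \<Sum>k<N. x (n, k))
            \<in> measurable (PiM K (\<lambda>_. count_space (UNIV :: nat set))) (count_space UNIV)"
    proof (rule measurable_sum_count_space_nat[where f="\<lambda>k x. x (n, k)"])
      show "(\<lambda>x. x (n, k))
              \<in> measurable (PiM K (\<lambda>_. count_space (UNIV :: nat set))) (count_space UNIV)" for k
        using Suc.prems by (intro measurable_component_singleton) auto
    qed
  qed (use Suc.prems in auto)
  then show ?case by simp
qed

lemma measurable_gw_size_array:
  assumes "\<And>i. X i \<in> measurable M (count_space UNIV)"
  shows "(\<lambda>\<omega>. gw_size n (\<lambda>i. X i \<omega>)) \<in> measurable M (count_space UNIV)"
proof -
  have "(\<lambda>\<omega>. restrict (\<lambda>i. X i \<omega>) UNIV) \<in> measurable M (PiM UNIV (\<lambda>_. count_space UNIV))"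
    by (rule measurable_restrict) (rule assms)
  from measurable_compose[OF this measurable_gw_size[of n UNIV]] show ?thesis by (simp add: restrict_UNIV)
qed

lemma (in prob_space) integral_split_count_space_nat:
  fixes N :: "'a \<Rightarrow> nat" and G :: "nat \<Rightarrow> 'a \<Rightarrow> complex"
  assumes N: "N \<in> measurable M (count_space UNIV)" and G: "\<And>z. G z \<in> borel_measurable M"
    and G_le_1: "\<And>z \<omega>. norm (G z \<omega>) \<le> 1"
  shows "(\<integral>\<omega>. G (N \<omega>) \<omega> \<partial>M) =
    (\<Sum>z. \<integral>\<omega>. of_real (indicator {\<omega>\<in>space M. N \<omega> = z} \<omega>) * G z \<omega> \<partial>M)"
proof -
  define S where "S z = {\<omega>\<in>space M. N \<omega> = z}" for z
  have S: "S z \<in> sets M" for z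
    using measurable_sets[OF N, of "{z}"] by (simp add: S_def vimage_def Int_def conj_commute)
  let ?f = "\<lambda>z \<omega>. of_real (indicator (S z) \<omega>) * G z \<omega>"
  have f_eq: "?f z \<omega> = (if z = N \<omega> then G z \<omega> else 0)" if "\<omega> \<in> space M" for z \<omega>
    using that by (auto simp: S_def)
  have f_int: "integrable M (?f z)" for z
    by (rule integrable_const_bound[where B=1]) (use S G G_le_1 in \<open>auto simp: norm_mult indicator_def\<close>)
  have "norm (?f z \<omega>) = (if z = N \<omega> then norm (G z \<omega>) else 0)" if "\<omega> \<in> space M" for z \<omega>
    using f_eq[OF that] by simp
  then have "AE \<omega> in M. summable (\<lambda>z. norm (?f z \<omega>))"
    by (intro AE_I2) simp
  moreover have "summable (\<lambda>z. \<integral>\<omega>. norm (?f z \<omega>) \<partial>M)"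
  proof (rule summable_comparison_test')
    have "(\<lambda>z. measure M (S z)) sums measure M (\<Union>z. S z)"
      by (rule measure_UNION) (use S in \<open>auto simp: disjoint_family_on_def S_def\<close>)
    then show "summable (\<lambda>z. measure M (S z))" by (simp add: sums_iff)
    have "integrable M (indicator (S z) :: 'a \<Rightarrow> real)" for z
      using S by (intro integrable_real_indicator) (auto simp: emeasure_eq_measure)
    then have "(\<integral>\<omega>. norm (?f z \<omega>) \<partial>M) \<le> (\<integral>\<omega>. indicator (S z) \<omega> \<partial>M)" for z
      by (rule integral_mono[OF integrable_norm[OF f_int]]) (auto simp: indicator_def norm_mult G_le_1)
    then show "norm (\<integral>\<omega>. norm (?f z \<omega>) \<partial>M) \<le> measure M (S z)" for z
      using S by simp
  qed
  ultimately have "(\<integral>\<omega>. (\<Sum>z. ?f z \<omega>) \<partial>M) = (\<Sum>z. \<integral>\<omega>. ?f z \<omega> \<partial>M)"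
    by (rule integral_suminf[OF f_int])
  moreover have "(\<integral>\<omega>. G (N \<omega>) \<omega> \<partial>M) = (\<integral>\<omega>. (\<Sum>z. ?f z \<omega>) \<partial>M)"
    using sums_single[of _ "\<lambda>z. G z _"]
    by (intro Bochner_Integration.integral_cong) (auto simp: f_eq sums_iff if_distrib)
  ultimately show ?thesis by (simp add: S_def)
qed

context prob_space
begin

lemma integral_gw_size_eq_prod:
  fixes X :: "nat \<times> nat \<Rightarrow> 'a \<Rightarrow> nat" and f :: "complex \<Rightarrow> complex"
  assumes indep: "indep_vars (\<lambda>_. count_space UNIV) X UNIV"
    and pgf: "\<And>i. (\<integral>\<omega>. w ^ X i \<omega> \<partial>M) = f w"
    and w: "norm w \<le> 1"
  shows "(\<integral>\<omega>. of_real (indicator {\<omega>\<in>space M. gw_size n (\<lambda>i. X i \<omega>) = z} \<omega>) *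
             (\<Prod>k<z. w ^ X (n, k) \<omega>) \<partial>M)
         = of_real (prob {\<omega>\<in>space M. gw_size n (\<lambda>i. X i \<omega>) = z}) * f w ^ z"
proof -
  let ?S = "{\<omega>\<in>space M. gw_size n (\<lambda>i. X i \<omega>) = z}"
  define L :: "nat option set" where "L = insert None (Some ` {..<z})"
  \<comment> \<open>\<open>{Z\<^sub>n = z}\<close> depends only on the generations before \<open>n\<close>, each factor \<open>w ^ X (n, k)\<close> on a
    single entry of generation \<open>n\<close>; independence over these disjoint index sets factorises the integral\<close>
  define K :: "nat option \<Rightarrow> (nat \<times> nat) set" where
    "K j = (case j of None \<Rightarrow> {(i, k). i < n} | Some k \<Rightarrow> {(n, k)})" for j
  define Y :: "nat option \<Rightarrow> (nat \<times> nat \<Rightarrow> nat) \<Rightarrow> complex" where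
    "Y j x = (case j of None \<Rightarrow> (if gw_size n x = z then 1 else 0) | Some k \<Rightarrow> w ^ x (n, k))" for j x
  let ?V = "\<lambda>j \<omega>. Y j (restrict (\<lambda>i. X i \<omega>) (K j))"
  have X: "X i \<in> measurable M (count_space UNIV)" for i
    using indep unfolding indep_vars_def by blast
  have K_None: "{(i, k). i < n} \<subseteq> K None" by (simp add: K_def)
  have restrict: "gw_size n (restrict x {(i, k). i < n}) = gw_size n x" for x
    by (rule gw_size_restrict) simp
  have Y: "Y j \<in> borel_measurable (PiM (K j) (\<lambda>_. count_space UNIV))" for j
  proof (cases j)
    case None
    from measurable_compose[OF measurable_gw_size[OF K_None[unfolded None[symmetric]]]
        borel_measurable_count_space[of "\<lambda>N. if N = z then 1 else (0::complex)"]]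
    show ?thesis by (simp add: Y_def[abs_def] None)
  next
    case (Some k)
    have "(\<lambda>x. x (n, k)) \<in> measurable (PiM (K j) (\<lambda>_. count_space UNIV)) (count_space (UNIV::nat set))"
      by (rule measurable_component_singleton) (auto simp: K_def Some)
    from measurable_compose[OF this borel_measurable_count_space[of "\<lambda>N. w ^ N"]]
    show ?thesis by (simp add: Y_def[abs_def] Some)
  qed
  have "indep_vars (\<lambda>j. PiM (K j) (\<lambda>_. count_space UNIV)) (\<lambda>j \<omega>. restrict (\<lambda>i. X i \<omega>) (K j)) L"
    by (rule indep_vars_restrict[OF indep])
      (auto simp: disjoint_family_on_def K_def L_def split: option.splits)
  then have indep_V: "indep_vars (\<lambda>_. borel) ?V L"
    by (rule indep_vars_compose2[OF _ Y])
  have V_int: "integrable M (?V j)" for j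
  proof (rule integrable_const_bound[where B=1])
    show "AE \<omega> in M. norm (?V j \<omega>) \<le> 1"
      using w by (auto simp: Y_def norm_power power_le_one split: option.splits)
    have "(\<lambda>\<omega>. restrict (\<lambda>i. X i \<omega>) (K j)) \<in> measurable M (PiM (K j) (\<lambda>_. count_space UNIV))"
      by (rule measurable_restrict) (rule X)
    from measurable_compose[OF this Y] show "?V j \<in> borel_measurable M" .
  qed
  have prod_L: "(\<Prod>j\<in>L. g j) = g None * (\<Prod>k<z. g (Some k))" for g :: "nat option \<Rightarrow> complex"
    unfolding L_def by (subst prod.insert) (auto simp: prod.reindex)
  have "(\<integral>\<omega>. ?V None \<omega> \<partial>M) = (\<integral>\<omega>. of_real (indicator ?S \<omega>) \<partial>M)"
    by (intro Bochner_Integration.integral_cong) (auto simp: Y_def K_def restrict)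
  also have "\<dots> = of_real (prob ?S)"
    using measurable_sets[OF measurable_gw_size_array[OF X], of "{z}" n]
    by (simp add: vimage_def Int_def conj_commute)
  finally have V_None: "(\<integral>\<omega>. ?V None \<omega> \<partial>M) = of_real (prob ?S)" .
  have "(\<integral>\<omega>. of_real (indicator ?S \<omega>) * (\<Prod>k<z. w ^ X (n, k) \<omega>) \<partial>M) = (\<integral>\<omega>. (\<Prod>j\<in>L. ?V j \<omega>) \<partial>M)"
    by (intro Bochner_Integration.integral_cong) (auto simp: prod_L Y_def K_def restrict)
  also have "\<dots> = (\<Prod>j\<in>L. \<integral>\<omega>. ?V j \<omega> \<partial>M)"
    by (rule indep_vars_lebesgue_integral[OF _ indep_V V_int]) (simp add: L_def)
  finally show ?thesis
    using pgf V_None by (simp add: prod_L Y_def K_def)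
qed

lemma integral_power_gw_size:
  fixes X :: "nat \<times> nat \<Rightarrow> 'a \<Rightarrow> nat" and f :: "complex \<Rightarrow> complex"
  assumes indep: "indep_vars (\<lambda>_. count_space UNIV) X UNIV"
    and pgf: "\<And>i w. norm w \<le> 1 \<Longrightarrow> (\<integral>\<omega>. w ^ X i \<omega> \<partial>M) = f w"
    and f_le_1: "\<And>w. norm w \<le> 1 \<Longrightarrow> norm (f w) \<le> 1"
    and "norm w \<le> 1"
  shows "(\<integral>\<omega>. w ^ gw_size n (\<lambda>i. X i \<omega>) \<partial>M) = (f ^^ n) w"
  using \<open>norm w \<le> 1\<close>
proof (induction n arbitrary: w)
  case 0
  then show ?case by (simp add: prob_space)
next
  case (Suc n)
  have X: "X i \<in> measurable M (count_space UNIV)" for i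
    using indep unfolding indep_vars_def by blast
  note Z = measurable_gw_size_array[OF X, of n]
  let ?S = "\<lambda>z. {\<omega>\<in>space M. gw_size n (\<lambda>i. X i \<omega>) = z}"
  have "(\<integral>\<omega>. w ^ gw_size (Suc n) (\<lambda>i. X i \<omega>) \<partial>M) =
      (\<integral>\<omega>. (\<lambda>z \<omega>. \<Prod>k<z. w ^ X (n, k) \<omega>) (gw_size n (\<lambda>i. X i \<omega>)) \<omega> \<partial>M)"
    by (simp add: power_sum)
  also have "\<dots> = (\<Sum>z. \<integral>\<omega>. of_real (indicator (?S z) \<omega>) * (\<Prod>k<z. w ^ X (n, k) \<omega>) \<partial>M)"
  proof (rule integral_split_count_space_nat[OF Z])
    show "(\<lambda>\<omega>. \<Prod>k<z. w ^ X (n, k) \<omega>) \<in> borel_measurable M" for z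
      using measurable_compose[OF X borel_measurable_count_space[of "\<lambda>N. w ^ N"]]
      by (intro borel_measurable_prod) auto
    show "norm (\<Prod>k<z. w ^ X (n, k) \<omega>) \<le> 1" for z \<omega>
      using Suc.prems by (auto simp: prod_norm[symmetric] norm_power intro!: prod_le_1 power_le_one)
  qed
  also have "\<dots> = (\<Sum>z. of_real (prob (?S z)) * f w ^ z)"
    using integral_gw_size_eq_prod[of X w f n] indep pgf Suc.prems by simp
  also have "\<dots> = (\<Sum>z. \<integral>\<omega>. of_real (indicator (?S z) \<omega>) * f w ^ z \<partial>M)"
    using measurable_sets[OF Z] by (simp add: vimage_def Int_def conj_commute)
  also have "\<dots> = (\<integral>\<omega>. (\<lambda>z \<omega>. f w ^ z) (gw_size n (\<lambda>i. X i \<omega>)) \<omega> \<partial>M)"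
    by (rule integral_split_count_space_nat[OF Z, symmetric])
      (use f_le_1[OF Suc.prems] in \<open>auto simp: norm_power power_le_one\<close>)
  also have "\<dots> = (f ^^ n) (f w)"
    using Suc.IH[OF f_le_1[OF Suc.prems]] by simp
  finally show ?case by (simp only: funpow_Suc_right comp_def)
qed

end

section \<open>Real generating function and its iterates\<close>

lemma pmf_sums_integral:
  fixes f :: "nat \<Rightarrow> 'b::{banach, second_countable_topology}"
  assumes "\<And>j. norm (f j) \<le> B"
  shows "(\<lambda>j. pmf P j *\<^sub>R f j) sums (\<integral>x. f x \<partial>measure_pmf P)"
proof -
  have "integrable (measure_pmf P) f"
    by (rule measure_pmf.integrable_const_bound[where B=B]) (use assms in auto)
  then have "integrable (count_space UNIV) (\<lambda>x. pmf P x *\<^sub>R f x)"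
    unfolding measure_pmf_eq_density by (subst (asm) integrable_density) auto
  moreover have "(\<integral>x. f x \<partial>measure_pmf P) = (\<integral>x. pmf P x *\<^sub>R f x \<partial>count_space UNIV)"
    unfolding measure_pmf_eq_density by (subst integral_density) auto
  ultimately show ?thesis using sums_integral_count_space_nat by simp
qed

lemma gf_pmf_eq_integral:
  assumes "norm w \<le> 1"
  shows "gf (pmf P) w = (\<integral>x. w ^ x \<partial>measure_pmf P)"
proof -
  have "(\<lambda>j. pmf P j *\<^sub>R w ^ j) sums (\<integral>x. w ^ x \<partial>measure_pmf P)"
    by (rule pmf_sums_integral[where B=1]) (use assms in \<open>auto simp: norm_power power_le_one\<close>)
  then show ?thesis unfolding gf_def by (simp add: sums_iff scaleR_conv_of_real)
qed

definition real_pgf :: "nat pmf \<Rightarrow> real \<Rightarrow> real" where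
  "real_pgf P x = (\<integral>j. x ^ j \<partial>measure_pmf P)"

lemma integrable_power_pmf:
  assumes "\<bar>x::real\<bar> \<le> 1"
  shows "integrable (measure_pmf P) (\<lambda>j. x ^ j)"
  by (rule measure_pmf.integrable_const_bound[where B=1])
    (use assms in \<open>auto simp: power_abs power_le_one\<close>)

lemma norm_gf_le_real_pgf:
  assumes "norm w \<le> 1"
  shows "norm (gf (pmf P) w) \<le> real_pgf P (norm w)"
proof -
  have "norm (gf (pmf P) w) = norm (\<integral>x. w ^ x \<partial>measure_pmf P)"
    by (simp add: gf_pmf_eq_integral[OF assms])
  also have "\<dots> \<le> (\<integral>x. norm (w ^ x) \<partial>measure_pmf P)"
    by (rule integral_norm_bound)
  finally show ?thesis by (simp add: real_pgf_def norm_power)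
qed

lemma real_pgf_nonneg: "0 \<le> x \<Longrightarrow> 0 \<le> real_pgf P x"
  unfolding real_pgf_def by (rule integral_nonneg_AE) auto

lemma real_pgf_mono: "0 \<le> x \<Longrightarrow> x \<le> y \<Longrightarrow> y \<le> 1 \<Longrightarrow> real_pgf P x \<le> real_pgf P y"
  unfolding real_pgf_def by (rule integral_mono) (auto intro!: integrable_power_pmf power_mono)

lemma real_pgf_le_power:
  assumes "\<And>j. pmf P j > 0 \<Longrightarrow> \<mu> \<le> j" "0 \<le> x" "x \<le> 1"
  shows "real_pgf P x \<le> x ^ \<mu>"
proof -
  have "real_pgf P x \<le> (\<integral>j. x ^ \<mu> \<partial>measure_pmf P)"
    unfolding real_pgf_def
  proof (rule integral_mono_AE)
    show "AE j in measure_pmf P. x ^ j \<le> x ^ \<mu>"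
      using assms by (auto simp: AE_measure_pmf_iff set_pmf_iff intro!: power_decreasing)
  qed (use assms in \<open>auto intro!: integrable_power_pmf\<close>)
  then show ?thesis by (simp add: measure_pmf.prob_space)
qed

lemma real_pgf_le_1: "0 \<le> x \<Longrightarrow> x \<le> 1 \<Longrightarrow> real_pgf P x \<le> 1"
  using real_pgf_le_power[of P 0 x] by simp

lemma norm_gf_le_1: "norm w \<le> 1 \<Longrightarrow> norm (gf (pmf P) w) \<le> 1"
  using norm_gf_le_real_pgf[of w P] real_pgf_le_1[of "norm w" P] by simp

lemma real_pgf_le_schroeder:
  assumes "pmf P 0 = 0" "0 \<le> x" "x \<le> 1"
  shows "real_pgf P x \<le> pmf P 1 * x + (1 - pmf P 1) * x\<^sup>2"
proof -
  have x2: "0 \<le> x\<^sup>2" "x\<^sup>2 \<le> x" "x\<^sup>2 \<le> 1"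
    using assms by (auto simp: power2_eq_square mult_le_one mult_left_le)
  have "real_pgf P x \<le> (\<integral>j. (x - x\<^sup>2) * indicator {1} j + x\<^sup>2 \<partial>measure_pmf P)"
    unfolding real_pgf_def
  proof (rule integral_mono_AE)
    have "x ^ j \<le> (x - x\<^sup>2) * indicator {1} j + x\<^sup>2" if "j \<in> set_pmf P" for j
    proof -
      have "j \<noteq> 0" using that assms(1) by (cases j) (auto simp: set_pmf_iff)
      then consider "j = 1" | "2 \<le> j" by linarith
      then show ?thesis
      proof cases
        case 2
        then have "x ^ j \<le> x\<^sup>2" using assms by (intro power_decreasing) auto
        with 2 show ?thesis by simp
      qed simp
    qed
    then show "AE j in measure_pmf P. x ^ j \<le> (x - x\<^sup>2) * indicator {1} j + x\<^sup>2"
      by (simp add: AE_measure_pmf_iff)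
    show "integrable (measure_pmf P) (\<lambda>j. (x - x\<^sup>2) * indicator {1} j + x\<^sup>2)"
      by (rule measure_pmf.integrable_const_bound[where B=2]) (use x2 assms in \<open>auto simp: indicator_def\<close>)
  qed (use assms in \<open>auto intro!: integrable_power_pmf\<close>)
  also have "\<dots> = (x - x\<^sup>2) * pmf P 1 + x\<^sup>2"
    by (subst Bochner_Integration.integral_add)
      (auto simp: measure_pmf.prob_space measure_pmf_single measure_pmf.emeasure_eq_measure)
  finally show ?thesis by (simp add: algebra_simps)
qed

lemma funpow_real_pgf_bounds:
  "0 \<le> x \<Longrightarrow> x \<le> 1 \<Longrightarrow> 0 \<le> (real_pgf P ^^ N) x \<and> (real_pgf P ^^ N) x \<le> 1"
  by (induction N) (auto intro: real_pgf_nonneg real_pgf_le_1)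

lemma norm_funpow_gf_le:
  assumes "norm w \<le> x" "x \<le> 1"
  shows "norm ((gf (pmf P) ^^ N) w) \<le> (real_pgf P ^^ N) x"
proof (induction N)
  case (Suc N)
  have "0 \<le> (real_pgf P ^^ N) x" "(real_pgf P ^^ N) x \<le> 1"
    using funpow_real_pgf_bounds[of x] assms norm_ge_zero[of w] by auto
  with Suc.IH have "norm (gf (pmf P) ((gf (pmf P) ^^ N) w)) \<le> real_pgf P ((real_pgf P ^^ N) x)"
    by (meson norm_gf_le_real_pgf norm_ge_zero order_trans real_pgf_mono)
  then show ?case by simp
qed (use assms in simp)

lemma funpow_real_pgf_le_power:
  assumes "\<And>j. pmf P j > 0 \<Longrightarrow> \<mu> \<le> j" "0 \<le> x" "x \<le> 1"
  shows "(real_pgf P ^^ N) x \<le> x ^ (\<mu> ^ N)"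
proof (induction N)
  case (Suc N)
  have y: "0 \<le> (real_pgf P ^^ N) x" "(real_pgf P ^^ N) x \<le> 1"
    using funpow_real_pgf_bounds[OF assms(2,3)] by auto
  have "(real_pgf P ^^ Suc N) x \<le> ((real_pgf P ^^ N) x) ^ \<mu>"
    using real_pgf_le_power[OF assms(1) y] by simp
  also have "\<dots> \<le> (x ^ (\<mu> ^ N)) ^ \<mu>"
    by (rule power_mono[OF Suc.IH y(1)])
  finally show ?case by (simp add: power_mult[symmetric] mult.commute)
qed simp

lemma funpow_le_contraction:
  fixes g :: "real \<Rightarrow> real"
  assumes "\<And>y. 0 \<le> y \<Longrightarrow> y \<le> x \<Longrightarrow> 0 \<le> g y \<and> g y \<le> \<rho> * y" "0 \<le> x" "0 \<le> \<rho>" "\<rho> \<le> 1"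
  shows "0 \<le> (g ^^ N) x \<and> (g ^^ N) x \<le> x * \<rho> ^ N"
proof (induction N)
  case (Suc N)
  let ?y = "(g ^^ N) x"
  have "?y \<le> x" using Suc assms(2-4) by (metis mult_left_le power_le_one order_trans)
  then have "0 \<le> g ?y" "g ?y \<le> \<rho> * ?y" using assms(1) Suc by auto
  moreover have "\<rho> * ?y \<le> \<rho> * (x * \<rho> ^ N)" using Suc assms by (intro mult_left_mono) auto
  ultimately show ?case by (simp add: mult_ac)
qed (use assms in simp)

lemma funpow_schroeder_le_geometric:
  fixes g :: "real \<Rightarrow> real"
  assumes q: "0 < q" "q < 1"
    and g: "\<And>y. 0 \<le> y \<Longrightarrow> y \<le> 1 \<Longrightarrow> 0 \<le> g y \<and> g y \<le> q * y + (1 - q) * y\<^sup>2"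
    and x: "0 \<le> x" "x < 1"
  shows "\<exists>C>0. \<forall>N. (g ^^ N) x \<le> C * q ^ N"
proof -
  define \<rho> where "\<rho> = q + (1 - q) * x"
  have "0 \<le> (1 - q) * x" "(1 - q) * x < 1 - q" using q x by simp_all
  then have \<rho>: "0 \<le> \<rho>" "\<rho> < 1" using q unfolding \<rho>_def by linarith+
  have g_le: "g y \<le> y * (q + (1 - q) * y)" if "0 \<le> y" "y \<le> 1" for y
    using g[OF that] by (simp add: power2_eq_square algebra_simps)
  have "0 \<le> g y \<and> g y \<le> \<rho> * y" if "0 \<le> y" "y \<le> x" for y
  proof -
    have "y * (q + (1 - q) * y) \<le> y * \<rho>"
      using that q by (auto simp: \<rho>_def intro!: mult_left_mono)
    then show ?thesis using g_le[of y] g[of y] that x by (simp add: mult.commute)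
  qed
  then have decay: "0 \<le> (g ^^ N) x \<and> (g ^^ N) x \<le> x * \<rho> ^ N" for N
    using funpow_le_contraction[of x g \<rho>] x \<rho> by simp
  define \<kappa> where "\<kappa> = (1 - q) * x / q"
  have \<kappa>: "0 \<le> \<kappa>" using q x by (simp add: \<kappa>_def)
  \<comment> \<open>near 0 the quadratic term is a relative perturbation of size \<open>\<kappa> \<rho>\<^sup>N\<close>, which is summable\<close>
  have step: "g ((g ^^ N) x) \<le> q * (g ^^ N) x * exp (\<kappa> * \<rho> ^ N)" for N
  proof -
    let ?y = "(g ^^ N) x"
    have "x * \<rho> ^ N \<le> 1" using x \<rho> by (intro mult_le_one power_le_one) auto
    then have y: "0 \<le> ?y" "?y \<le> x * \<rho> ^ N" "?y \<le> 1"
      using decay[of N] by auto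
    have "(1 - q) * ?y \<le> q * (\<kappa> * \<rho> ^ N)"
      using y q by (simp add: \<kappa>_def mult_left_mono)
    then have "q + (1 - q) * ?y \<le> q * (1 + \<kappa> * \<rho> ^ N)" by (simp add: algebra_simps)
    also have "\<dots> \<le> q * exp (\<kappa> * \<rho> ^ N)"
      using q by (intro mult_left_mono exp_ge_add_one_self) auto
    finally have "?y * (q + (1 - q) * ?y) \<le> ?y * (q * exp (\<kappa> * \<rho> ^ N))"
      using y(1) by (rule mult_left_mono)
    with g_le[OF y(1,3)] show ?thesis by (simp add: mult_ac)
  qed
  have bound: "(g ^^ N) x \<le> q ^ N * x * exp (\<kappa> * (\<Sum>i<N. \<rho> ^ i))" for N
  proof (induction N)
    case (Suc N)
    have "(g ^^ Suc N) x \<le> q * (g ^^ N) x * exp (\<kappa> * \<rho> ^ N)"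
      using step by simp
    also have "\<dots> \<le> q * (q ^ N * x * exp (\<kappa> * (\<Sum>i<N. \<rho> ^ i))) * exp (\<kappa> * \<rho> ^ N)"
      using Suc.IH q by (intro mult_right_mono mult_left_mono) auto
    finally show ?case by (simp add: distrib_left exp_add mult_ac)
  qed simp
  define C where "C = x * exp (\<kappa> / (1 - \<rho>)) + 1"
  have "(g ^^ N) x \<le> C * q ^ N" for N
  proof -
    have "(\<Sum>i<N. \<rho> ^ i) \<le> 1 / (1 - \<rho>)"
      using \<rho> by (simp add: sum_gp_strict divide_right_mono)
    from mult_left_mono[OF this \<kappa>]
    have "exp (\<kappa> * (\<Sum>i<N. \<rho> ^ i)) \<le> exp (\<kappa> / (1 - \<rho>))" by simp
    then have "q ^ N * x * exp (\<kappa> * (\<Sum>i<N. \<rho> ^ i)) \<le> q ^ N * x * exp (\<kappa> / (1 - \<rho>))"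
      using q x by (intro mult_left_mono) auto
    also have "\<dots> \<le> C * q ^ N" using q by (simp add: C_def algebra_simps)
    finally show ?thesis using bound[of N] by linarith
  qed
  moreover have "C > 0" using x by (simp add: C_def add_nonneg_pos)
  ultimately show ?thesis by blast
qed

lemma funpow_real_pgf_schroeder:
  assumes "pmf P 0 = 0" "0 < pmf P 1" "pmf P 1 < 1" "0 \<le> x" "x < 1"
  shows "\<exists>A>0. \<forall>N. (real_pgf P ^^ N) x \<le> A * pmf P 1 ^ Suc N"
proof -
  obtain C where "C > 0" and C: "\<And>N. (real_pgf P ^^ N) x \<le> C * pmf P 1 ^ N"
    using funpow_schroeder_le_geometric[of "pmf P 1" "real_pgf P" x] assms
      real_pgf_nonneg real_pgf_le_schroeder by blast
  then show ?thesis
    using assms(2) by (intro exI[of _ "C / pmf P 1"]) auto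
qed

section \<open>A Laplace--Fourier transform on the left half-plane\<close>

text \<open>The transform is taken of \<open>max 0 Y\<close>, so that the integrand is bounded by 1 on
  \<open>Re a \<le> 0\<close> without a sign hypothesis on \<open>Y\<close>.\<close>

definition lf_transform :: "'a measure \<Rightarrow> ('a \<Rightarrow> real) \<Rightarrow> complex \<Rightarrow> complex" where
  "lf_transform M Y a = (\<integral>\<omega>. exp (a * of_real (max 0 (Y \<omega>))) \<partial>M)"

lemma norm_exp_mult_of_real_le_1: "Re a \<le> 0 \<Longrightarrow> 0 \<le> t \<Longrightarrow> norm (exp (a * of_real t)) \<le> 1"
  by (simp add: mult_nonpos_nonneg)

lemma norm_exp_mult_of_real_diff_le:
  assumes "Re a \<le> 0" "0 \<le> s" "0 \<le> t"
  shows "norm (exp (a * of_real s) - exp (a * of_real t)) \<le> norm a * \<bar>s - t\<bar>"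
proof -
  have "norm (exp (a * of_real s) - exp (a * of_real t)) \<le> 1 * norm (a * of_real s - a * of_real t)"
  proof (rule field_differentiable_bound[OF convex_halfspace_Re_le[of 0]])
    show "(exp has_field_derivative exp z) (at z within {x. Re x \<le> 0})" for z
      by (rule DERIV_subset[OF DERIV_exp]) auto
  qed (use assms in \<open>auto simp: mult_nonpos_nonneg\<close>)
  also have "\<dots> = norm a * \<bar>s - t\<bar>"
    by (simp add: right_diff_distrib[symmetric] norm_mult of_real_diff[symmetric] del: of_real_diff)
  finally show ?thesis .
qed

context prob_space
begin

lemma integrable_lf_transform:
  assumes "Y \<in> borel_measurable M" "Re a \<le> 0"
  shows "integrable M (\<lambda>\<omega>. exp (a * of_real (max 0 (Y \<omega>))))"
proof (rule integrable_const_bound[where B=1])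
  show "AE \<omega> in M. norm (exp (a * of_real (max 0 (Y \<omega>)))) \<le> 1"
    using assms(2) by (intro AE_I2 norm_exp_mult_of_real_le_1) auto
qed (use assms(1) in measurable)

lemma continuous_on_lf_transform:
  assumes "Y \<in> borel_measurable M"
  shows "continuous_on {a. Re a \<le> 0} (lf_transform M Y)"
proof (rule continuous_on_sequentiallyI)
  fix u :: "nat \<Rightarrow> complex" and a
  assume u: "\<forall>n. u n \<in> {a. Re a \<le> 0}" and "u \<longlonglongrightarrow> a"
  show "(\<lambda>n. lf_transform M Y (u n)) \<longlonglongrightarrow> lf_transform M Y a"
    unfolding lf_transform_def
  proof (rule integral_dominated_convergence[where w="\<lambda>_. 1"])
    show "AE \<omega> in M. (\<lambda>n. exp (u n * of_real (max 0 (Y \<omega>)))) \<longlonglongrightarrow> exp (a * of_real (max 0 (Y \<omega>)))"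
      by (intro AE_I2 tendsto_intros \<open>u \<longlonglongrightarrow> a\<close>)
    show "AE \<omega> in M. norm (exp (u n * of_real (max 0 (Y \<omega>)))) \<le> 1" for n
      using u by (intro AE_I2 norm_exp_mult_of_real_le_1) auto
  qed (use assms in auto)
qed

lemma integral_exp_max_mono:
  fixes Y :: "'a \<Rightarrow> real"
  assumes "Y \<in> borel_measurable M" "s \<le> s'" "s' \<le> 0"
  shows "(\<integral>\<omega>. exp (s * max 0 (Y \<omega>)) \<partial>M) \<le> (\<integral>\<omega>. exp (s' * max 0 (Y \<omega>)) \<partial>M)"
proof -
  have "integrable M (\<lambda>\<omega>. exp (r * max 0 (Y \<omega>)))" if "r \<le> 0" for r
    by (rule integrable_const_bound[where B=1])
      (use that assms in \<open>auto intro!: AE_I2 simp: mult_nonpos_nonneg\<close>)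
  then show ?thesis
    using assms by (intro integral_mono) (auto intro!: mult_right_mono)
qed

lemma norm_lf_transform_le:
  "Y \<in> borel_measurable M \<Longrightarrow> norm (lf_transform M Y a) \<le> (\<integral>\<omega>. exp (Re a * max 0 (Y \<omega>)) \<partial>M)"
  unfolding lf_transform_def by (rule order_trans[OF integral_norm_bound]) simp

lemma norm_lf_transform_le_1:
  "Y \<in> borel_measurable M \<Longrightarrow> Re a \<le> 0 \<Longrightarrow> norm (lf_transform M Y a) \<le> 1"
  using norm_lf_transform_le[of Y a] integral_exp_max_mono[of Y "Re a" 0] by (simp add: prob_space)

lemma lf_transform_of_real:
  "lf_transform M Y (of_real s) = of_real (\<integral>\<omega>. exp (s * max 0 (Y \<omega>)) \<partial>M)"
proof -
  have "exp (of_real s * of_real t :: complex) = of_real (exp (s * t))" for t :: real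
    by (simp flip: exp_of_real)
  then show ?thesis by (simp add: lf_transform_def)
qed

lemma integral_exp_max_lt_1:
  fixes Y :: "'a \<Rightarrow> real"
  assumes Y: "Y \<in> borel_measurable M" and nz: "\<not> (AE \<omega> in M. Y \<omega> \<le> 0)" and "s < 0"
  shows "(\<integral>\<omega>. exp (s * max 0 (Y \<omega>)) \<partial>M) < 1"
proof (rule ccontr)
  let ?R = "\<lambda>\<omega>. 1 - exp (s * max 0 (Y \<omega>))"
  assume "\<not> ?thesis"
  have int_exp: "integrable M (\<lambda>\<omega>. exp (s * max 0 (Y \<omega>)))"
    by (rule integrable_const_bound[where B=1])
      (use \<open>s < 0\<close> Y in \<open>auto intro!: AE_I2 simp: mult_nonpos_nonneg\<close>)
  then have int: "integrable M ?R" by auto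
  have nonneg: "AE \<omega> in M. 0 \<le> ?R \<omega>"
    using \<open>s < 0\<close> by (intro AE_I2) (auto simp: mult_nonpos_nonneg)
  have "integral\<^sup>L M ?R = 1 - (\<integral>\<omega>. exp (s * max 0 (Y \<omega>)) \<partial>M)"
    using int_exp by (subst Bochner_Integration.integral_diff) (auto simp: prob_space)
  with \<open>\<not> ?thesis\<close> integral_nonneg_AE[OF nonneg] have "integral\<^sup>L M ?R = 0" by linarith
  then have "AE \<omega> in M. ?R \<omega> = 0"
    using integral_nonneg_eq_0_iff_AE[OF int nonneg] by simp
  then have "AE \<omega> in M. Y \<omega> \<le> 0"
    by eventually_elim (use \<open>s < 0\<close> in auto)
  with nz show False by simp
qed

lemma norm_lf_transform_lt_1:
  "Y \<in> borel_measurable M \<Longrightarrow> \<not> (AE \<omega> in M. Y \<omega> \<le> 0) \<Longrightarrow> Re a < 0 \<Longrightarrow> norm (lf_transform M Y a) < 1"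
  by (rule le_less_trans[OF norm_lf_transform_le integral_exp_max_lt_1])

lemma AE_eq_integral_if_norm_integral_eq_1:
  fixes Z :: "'a \<Rightarrow> complex"
  assumes Z: "integrable M Z" and le_1: "\<And>\<omega>. norm (Z \<omega>) \<le> 1" and eq_1: "norm (integral\<^sup>L M Z) = 1"
  shows "AE \<omega> in M. Z \<omega> = integral\<^sup>L M Z"
proof -
  define c where "c = integral\<^sup>L M Z"
  have "c * cnj c = of_real ((cmod c)\<^sup>2)" by (rule complex_norm_square[symmetric])
  then have cc: "cnj c * c = 1" using eq_1 by (simp add: c_def mult.commute)
  let ?R = "\<lambda>\<omega>. 1 - Re (cnj c * Z \<omega>)"
  have v_le_1: "norm (cnj c * Z \<omega>) \<le> 1" for \<omega>
    using le_1[of \<omega>] eq_1 by (simp add: c_def norm_mult)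
  have "0 \<le> ?R \<omega>" for \<omega>
    using complex_Re_le_cmod[of "cnj c * Z \<omega>"] v_le_1[of \<omega>] by linarith
  then have nonneg: "AE \<omega> in M. 0 \<le> ?R \<omega>" by simp
  have "integral\<^sup>L M ?R = 1 - Re (cnj c * c)"
    using Z by (simp add: prob_space c_def)
  with cc have "integral\<^sup>L M ?R = 0" by simp
  then have "AE \<omega> in M. ?R \<omega> = 0"
    using integral_nonneg_eq_0_iff_AE[OF _ nonneg] Z by simp
  then show ?thesis
  proof (rule AE_mp, intro AE_I2 impI)
    fix \<omega> assume "?R \<omega> = 0"
    define v where "v = cnj c * Z \<omega>"
    have "Re v = 1" "norm v \<le> 1" using \<open>?R \<omega> = 0\<close> v_le_1 by (simp_all add: v_def)
    then have "(Im v)\<^sup>2 \<le> 0"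
      by (simp add: cmod_def)
    then have "v = 1" using \<open>Re v = 1\<close> by (simp add: complex_eq_iff)
    have "Z \<omega> = c * (cnj c * Z \<omega>)"
      using cc by (simp add: mult.assoc[symmetric] mult.commute[of c])
    with \<open>v = 1\<close> show "Z \<omega> = integral\<^sup>L M Z" by (simp add: v_def c_def)
  qed
qed

lemma lf_transform_band_bound:
  assumes Y: "Y \<in> borel_measurable M" and nz: "\<not> (AE \<omega> in M. Y \<omega> \<le> 0)" and "0 < lo" "lo \<le> hi"
    and imag_lt_1: "\<And>a. Re a = 0 \<Longrightarrow> lo \<le> \<bar>Im a\<bar> \<Longrightarrow> \<bar>Im a\<bar> \<le> hi \<Longrightarrow> norm (lf_transform M Y a) < 1"
  shows "\<exists>\<theta><1. \<forall>a. Re a \<le> 0 \<longrightarrow> lo \<le> \<bar>Im a\<bar> \<longrightarrow> \<bar>Im a\<bar> \<le> hi \<longrightarrow> norm (lf_transform M Y a) \<le> \<theta>"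
proof -
  define K where "K = {a. -1 \<le> Re a \<and> Re a \<le> 0 \<and> lo \<le> \<bar>Im a\<bar> \<and> \<bar>Im a\<bar> \<le> hi}"
  have "closed K"
    unfolding K_def Collect_conj_eq by (intro closed_Int closed_Collect_le continuous_intros)
  moreover have "bounded K"
  proof -
    have "norm a \<le> 1 + hi" if "a \<in> K" for a
      using cmod_le[of a] that by (auto simp: K_def)
    then show ?thesis unfolding bounded_iff by blast
  qed
  ultimately have "compact K" by (simp add: compact_eq_bounded_closed)
  moreover have "Complex 0 lo \<in> K" using \<open>0 < lo\<close> \<open>lo \<le> hi\<close> by (simp add: K_def)
  moreover have "continuous_on K (\<lambda>a. norm (lf_transform M Y a))"
    by (intro continuous_on_norm continuous_on_subset[OF continuous_on_lf_transform[OF Y]])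
      (auto simp: K_def)
  ultimately obtain a0 where a0: "a0 \<in> K" and max: "\<And>a. a \<in> K \<Longrightarrow> norm (lf_transform M Y a) \<le> norm (lf_transform M Y a0)"
    using continuous_attains_sup[of K] by blast
  have a0_lt_1: "norm (lf_transform M Y a0) < 1"
  proof (cases "Re a0 < 0")
    case True then show ?thesis by (rule norm_lf_transform_lt_1[OF Y nz])
  qed (use a0 in \<open>auto simp: K_def intro!: imag_lt_1\<close>)
  define \<phi> where "\<phi> = (\<integral>\<omega>. exp (-1 * max 0 (Y \<omega>)) \<partial>M)"
  have "\<phi> < 1"
    unfolding \<phi>_def by (rule integral_exp_max_lt_1[OF Y nz]) simp
  with a0_lt_1 have "max (norm (lf_transform M Y a0)) \<phi> < 1" by simp
  moreover have "norm (lf_transform M Y a) \<le> max (norm (lf_transform M Y a0)) \<phi>"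
    if a: "Re a \<le> 0" "lo \<le> \<bar>Im a\<bar>" "\<bar>Im a\<bar> \<le> hi" for a
  proof (cases "-1 \<le> Re a")
    case True
    with a max[of a] show ?thesis by (simp add: K_def)
  next
    case False
    then show ?thesis
      using norm_lf_transform_le[OF Y, of a] integral_exp_max_mono[OF Y, of "Re a" "-1"]
      by (simp add: \<phi>_def)
  qed
  ultimately show ?thesis by blast
qed

lemma lf_transform_uniform_approx:
  assumes X: "\<And>j. X j \<in> borel_measurable M" and Y: "Y \<in> borel_measurable M"
    and lim: "AE \<omega> in M. (\<lambda>j. X j \<omega>) \<longlonglongrightarrow> Y \<omega>" and "0 \<le> R"
  shows "\<exists>\<eta>. \<eta> \<longlonglongrightarrow> 0 \<and>
    (\<forall>j a. Re a \<le> 0 \<longrightarrow> norm a \<le> R \<longrightarrow> norm (lf_transform M (X j) a - lf_transform M Y a) \<le> \<eta> j)"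
proof -
  define \<eta> where "\<eta> j = (\<integral>\<omega>. min 2 (R * \<bar>X j \<omega> - Y \<omega>\<bar>) \<partial>M)" for j
  have \<eta>_meas: "(\<lambda>\<omega>. min 2 (R * \<bar>X j \<omega> - Y \<omega>\<bar>)) \<in> borel_measurable M" for j
    using X[of j] Y by measurable
  have "\<eta> \<longlonglongrightarrow> (\<integral>\<omega>. 0 \<partial>M)"
    unfolding \<eta>_def
  proof (rule integral_dominated_convergence[where w="\<lambda>_. 2"])
    show "AE \<omega> in M. (\<lambda>j. min 2 (R * \<bar>X j \<omega> - Y \<omega>\<bar>)) \<longlonglongrightarrow> 0"
      using lim
    proof eventually_elim
      case (elim \<omega>)
      then have "(\<lambda>j. min 2 (R * \<bar>X j \<omega> - Y \<omega>\<bar>)) \<longlonglongrightarrow> min 2 (R * \<bar>Y \<omega> - Y \<omega>\<bar>)"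
        by (intro tendsto_intros)
      then show ?case by simp
    qed
    show "AE \<omega> in M. norm (min 2 (R * \<bar>X j \<omega> - Y \<omega>\<bar>)) \<le> 2" for j
      using \<open>0 \<le> R\<close> by (intro AE_I2) auto
  qed (use \<eta>_meas in auto)
  moreover have "norm (lf_transform M (X j) a - lf_transform M Y a) \<le> \<eta> j"
    if a: "Re a \<le> 0" "norm a \<le> R" for j a
  proof -
    let ?f = "\<lambda>Z \<omega>. exp (a * of_real (max 0 (Z \<omega>)))"
    have ints: "integrable M (?f (X j))" "integrable M (?f Y)"
      using integrable_lf_transform X Y a by auto
    have "norm (?f (X j) \<omega> - ?f Y \<omega>) \<le> min 2 (R * \<bar>X j \<omega> - Y \<omega>\<bar>)" for \<omega>
    proof -
      have "norm (?f (X j) \<omega> - ?f Y \<omega>) \<le> 1 + 1"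
        using a by (intro norm_triangle_le_diff add_mono norm_exp_mult_of_real_le_1) auto
      moreover have "norm (?f (X j) \<omega> - ?f Y \<omega>) \<le> norm a * \<bar>max 0 (X j \<omega>) - max 0 (Y \<omega>)\<bar>"
        by (rule norm_exp_mult_of_real_diff_le) (use a in auto)
      moreover have "norm a * \<bar>max 0 (X j \<omega>) - max 0 (Y \<omega>)\<bar> \<le> R * \<bar>X j \<omega> - Y \<omega>\<bar>"
        using a \<open>0 \<le> R\<close> by (intro mult_mono) (auto simp: max_def)
      ultimately show ?thesis by simp
    qed
    moreover have "integrable M (\<lambda>\<omega>. min 2 (R * \<bar>X j \<omega> - Y \<omega>\<bar>))"
      by (rule integrable_const_bound[where B=2]) (use \<eta>_meas \<open>0 \<le> R\<close> in auto)
    ultimately have "(\<integral>\<omega>. norm (?f (X j) \<omega> - ?f Y \<omega>) \<partial>M) \<le> \<eta> j"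
      unfolding \<eta>_def using ints by (intro integral_mono) auto
    moreover have "norm (lf_transform M (X j) a - lf_transform M Y a) =
        norm (\<integral>\<omega>. ?f (X j) \<omega> - ?f Y \<omega> \<partial>M)"
      unfolding lf_transform_def using ints by simp
    ultimately show ?thesis
      using integral_norm_bound[of M "\<lambda>\<omega>. ?f (X j) \<omega> - ?f Y \<omega>"] by linarith
  qed
  ultimately show ?thesis by auto
qed

lemma lf_transform_band_bound_eventually:
  assumes X: "\<And>j. X j \<in> borel_measurable M" and Y: "Y \<in> borel_measurable M"
    and lim: "AE \<omega> in M. (\<lambda>j. X j \<omega>) \<longlonglongrightarrow> Y \<omega>"
    and nz: "\<not> (AE \<omega> in M. Y \<omega> \<le> 0)" and "0 < lo" "lo \<le> hi"
    and imag_lt_1: "\<And>a. Re a = 0 \<Longrightarrow> lo \<le> \<bar>Im a\<bar> \<Longrightarrow> \<bar>Im a\<bar> \<le> hi \<Longrightarrow> norm (lf_transform M Y a) < 1"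
  shows "\<exists>J \<theta>. \<theta> < 1 \<and> (\<forall>j\<ge>J. \<forall>a. Re a \<le> 0 \<longrightarrow> lo \<le> \<bar>Im a\<bar> \<longrightarrow> \<bar>Im a\<bar> \<le> hi \<longrightarrow>
                                 norm (lf_transform M (X j) a) \<le> \<theta>)"
proof -
  obtain \<theta>Y where "\<theta>Y < 1" and \<theta>Y: "\<And>a. Re a \<le> 0 \<Longrightarrow> lo \<le> \<bar>Im a\<bar> \<Longrightarrow> \<bar>Im a\<bar> \<le> hi \<Longrightarrow> norm (lf_transform M Y a) \<le> \<theta>Y"
    using lf_transform_band_bound[OF Y nz \<open>0 < lo\<close> \<open>lo \<le> hi\<close> imag_lt_1] by blast
  define \<theta>' where "\<theta>' = max \<theta>Y (norm (lf_transform M Y (-1)))"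
  have "\<theta>' < 1" using \<open>\<theta>Y < 1\<close> norm_lf_transform_lt_1[OF Y nz, of "-1"] by (simp add: \<theta>'_def)
  have le_\<theta>': "\<theta>Y \<le> \<theta>'" "norm (lf_transform M Y (-1)) \<le> \<theta>'" by (simp_all add: \<theta>'_def)
  obtain \<eta> where "\<eta> \<longlonglongrightarrow> 0" and \<eta>: "\<And>j a. Re a \<le> 0 \<Longrightarrow> norm a \<le> 1 + hi \<Longrightarrow>
      norm (lf_transform M (X j) a - lf_transform M Y a) \<le> \<eta> j"
    using lf_transform_uniform_approx[OF X Y lim, of "1 + hi"] \<open>0 < lo\<close> \<open>lo \<le> hi\<close> by auto
  then obtain J where J: "\<And>j. J \<le> j \<Longrightarrow> \<eta> j < (1 - \<theta>') / 2"
    using order_tendstoD(2)[OF \<open>\<eta> \<longlonglongrightarrow> 0\<close>, of "(1 - \<theta>') / 2"] \<open>\<theta>' < 1\<close>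
    by (auto simp: eventually_sequentially)
  have close: "norm (lf_transform M (X j) a) \<le> norm (lf_transform M Y a) + \<eta> j"
    if "Re a \<le> 0" "norm a \<le> 1 + hi" for j a
    using norm_triangle_sub[of "lf_transform M (X j) a" "lf_transform M Y a"] \<eta>[OF that, of j]
    by linarith
  have "norm (lf_transform M (X j) a) \<le> \<theta>' + (1 - \<theta>') / 2"
    if j: "J \<le> j" and a: "Re a \<le> 0" "lo \<le> \<bar>Im a\<bar>" "\<bar>Im a\<bar> \<le> hi" for j a
  proof (cases "-1 \<le> Re a")
    case True
    then have "norm a \<le> 1 + hi" using a cmod_le[of a] by linarith
    with close[OF a(1)] \<theta>Y[OF a] J[OF j] le_\<theta>' show ?thesis by (smt (verit))
  next
    case False
    have "norm (lf_transform M (X j) a) \<le> (\<integral>\<omega>. exp (-1 * max 0 (X j \<omega>)) \<partial>M)"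
      using norm_lf_transform_le[OF X, of j a] integral_exp_max_mono[OF X[of j], of "Re a" "-1"] False
      by simp
    also have "\<dots> \<le> norm (lf_transform M (X j) (-1))"
      using lf_transform_of_real[of "X j" "-1"] by simp
    also have "\<dots> \<le> norm (lf_transform M Y (-1)) + \<eta> j"
      using close[of "-1" j] \<open>0 < lo\<close> \<open>lo \<le> hi\<close> by simp
    finally show ?thesis using J[OF j] le_\<theta>' by linarith
  qed
  moreover have "\<theta>' + (1 - \<theta>') / 2 < 1" using \<open>\<theta>' < 1\<close> by (simp add: field_simps)
  ultimately show ?thesis by blast
qed

end

section \<open>The transform stays below 1 on the imaginary axis\<close>

lemma power_Gcd_eq_1:
  fixes \<zeta> :: "'a::monoid_mult" and S :: "nat set"
  assumes "\<And>D. D \<in> S \<Longrightarrow> \<zeta> ^ D = 1"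
  shows "\<zeta> ^ Gcd S = 1"
proof (cases "S \<subseteq> {0}")
  case True
  then have "Gcd S = 0" by simp
  then show ?thesis by (simp only: power_0)
next
  case False
  then obtain D0 where "D0 \<in> S" "D0 > 0" by auto
  define g where "g = (LEAST n. 0 < n \<and> \<zeta> ^ n = 1)"
  have g: "0 < g" "\<zeta> ^ g = 1"
    using LeastI[of "\<lambda>n. 0 < n \<and> \<zeta> ^ n = 1" D0] \<open>D0 \<in> S\<close> \<open>D0 > 0\<close> assms by (auto simp: g_def)
  have "g dvd D" if "D \<in> S" for D
  proof -
    have "\<zeta> ^ D = \<zeta> ^ (g * (D div g) + D mod g)" by simp
    also have "\<dots> = (\<zeta> ^ g) ^ (D div g) * \<zeta> ^ (D mod g)" by (simp only: power_add power_mult)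
    finally have "\<zeta> ^ D = (\<zeta> ^ g) ^ (D div g) * \<zeta> ^ (D mod g)" .
    then have "\<zeta> ^ (D mod g) = 1" using assms[OF that] g by simp
    moreover have "D mod g < g" using g by simp
    ultimately have "D mod g = 0"
      using not_less_Least[of "D mod g" "\<lambda>n. 0 < n \<and> \<zeta> ^ n = 1"] by (auto simp: g_def)
    then show ?thesis by (simp add: dvd_eq_mod_eq_0)
  qed
  then have "g dvd Gcd S" by (simp add: Gcd_greatest)
  then obtain k where "Gcd S = g * k" by (rule dvdE)
  then show ?thesis using g by (simp add: power_mult)
qed

lemma exp_i_neq_1:
  fixes x :: real
  assumes "0 < \<bar>x\<bar>" "\<bar>x\<bar> \<le> pi"
  shows "exp (\<i> * of_real x) \<noteq> 1"
proof
  assume "exp (\<i> * of_real x) = 1"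
  then obtain n :: int where n: "x = of_int (2 * n) * pi" by (auto simp: exp_eq_1)
  with assms have "n \<noteq> 0" by auto
  then have "2 * pi \<le> \<bar>x\<bar>" using n pi_gt_zero by (simp add: abs_mult)
  with assms pi_gt_zero show False by linarith
qed

lemma (in prob_space) norm_lf_transform_imag_lt_1:
  assumes W: "W \<in> borel_measurable M"
    and W_ac: "\<And>A. A \<in> sets borel \<Longrightarrow> A \<subseteq> {0<..} \<Longrightarrow> emeasure lborel A = 0 \<Longrightarrow>
                 emeasure M (W -` A \<inter> space M) = 0"
    and nz: "\<not> (AE \<omega> in M. W \<omega> \<le> 0)" and a: "Re a = 0" "Im a \<noteq> 0"
  shows "norm (lf_transform M W a) < 1"
proof (rule ccontr)
  assume "\<not> ?thesis"
  then have "norm (lf_transform M W a) = 1" using norm_lf_transform_le_1[OF W, of a] a by simp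
  then have ae: "AE \<omega> in M. exp (a * of_real (max 0 (W \<omega>))) = lf_transform M W a"
    unfolding lf_transform_def
    by (intro AE_eq_integral_if_norm_integral_eq_1 integrable_lf_transform W)
      (use a in \<open>auto intro: norm_exp_mult_of_real_le_1\<close>)
  \<comment> \<open>the level set of \<open>x \<mapsto> exp (a x)\<close> is a lattice of mesh \<open>2\<pi>/\<bar>Im a\<bar>\<close>, hence Lebesgue-null\<close>
  define S where "S = {x. 0 < x \<and> exp (a * of_real x) = lf_transform M W a}"
  have "countable S"
  proof (cases "S = {}")
    case False
    then obtain x0 where x0: "x0 \<in> S" by auto
    have "S \<subseteq> range (\<lambda>n::int. x0 + 2 * pi * of_int n / Im a)"
    proof
      fix x assume "x \<in> S"
      with x0 have "exp (a * of_real x - a * of_real x0) = 1"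
        using exp_not_eq_zero[of "a * of_real x0"] by (simp add: S_def exp_diff)
      then obtain n :: int where "Im (a * of_real x - a * of_real x0) = of_int (2 * n) * pi"
        by (auto simp: exp_eq_1)
      then have "x = x0 + 2 * pi * of_int n / Im a" using a by (simp add: field_simps)
      then show "x \<in> range (\<lambda>n::int. x0 + 2 * pi * of_int n / Im a)" by blast
    qed
    then show ?thesis by (rule countable_subset) simp
  qed simp
  then have S: "S \<in> sets borel" "emeasure lborel S = 0"
    using countable_imp_null_set_lborel by (auto simp: null_sets_def)
  then have "W -` S \<inter> space M \<in> null_sets M"
    using W_ac[OF S(1) _ S(2)] measurable_sets[OF W S(1)] by (auto simp: S_def null_sets_def)
  then have "AE \<omega> in M. \<omega> \<notin> W -` S \<inter> space M" by (rule AE_not_in)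
  with ae AE_space have "AE \<omega> in M. W \<omega> \<le> 0"
  proof eventually_elim
    case (elim \<omega>)
    then show ?case by (cases "W \<omega> \<le> 0") (auto simp: S_def)
  qed
  with nz show False by simp
qed

lemma norm_lf_transform_pmf_imag_lt_1:
  fixes P :: "nat pmf"
  assumes d: "span_d (pmf P) > 0"
    and a: "Re a = 0" "0 < \<bar>Im a\<bar>" "\<bar>Im a\<bar> \<le> pi / real (span_d (pmf P))"
  shows "norm (lf_transform (measure_pmf P) real a) < 1"
proof (rule ccontr)
  assume "\<not> ?thesis"
  then have "norm (lf_transform (measure_pmf P) real a) = 1"
    using measure_pmf.norm_lf_transform_le_1[of real P a] a by simp
  then have ae: "AE j in measure_pmf P. exp (a * of_real (max 0 (real j))) = lf_transform (measure_pmf P) real a"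
    unfolding lf_transform_def
    by (intro measure_pmf.AE_eq_integral_if_norm_integral_eq_1 measure_pmf.integrable_lf_transform)
      (use a in \<open>auto intro: norm_exp_mult_of_real_le_1\<close>)
  have supp: "exp a ^ j = lf_transform (measure_pmf P) real a" if "pmf P j > 0" for j
    using ae that by (simp add: AE_measure_pmf_iff set_pmf_iff exp_of_nat_mult[symmetric] mult.commute)
  \<comment> \<open>\<open>exp a\<close> takes the same value at all support points, so it is a root of unity of order dividing \<open>d\<close>\<close>
  have "exp a ^ D = 1" if D: "D \<in> {j - l | j l. l < j \<and> pmf P j * pmf P l > 0}" for D
  proof -
    obtain j l where jl: "D = j - l" "l < j" "pmf P j * pmf P l > 0" using D by blast
    then have "pmf P j > 0" "pmf P l > 0"
      using pmf_nonneg[of P j] pmf_nonneg[of P l] by (auto simp: zero_less_mult_iff)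
    have "exp a ^ D * exp a ^ l = exp a ^ j"
      using jl by (simp flip: power_add)
    also have "\<dots> = exp a ^ l"
      using supp \<open>pmf P j > 0\<close> \<open>pmf P l > 0\<close> by simp
    finally have "exp a ^ D * exp a ^ l = exp a ^ l" .
    moreover have "exp a ^ l \<noteq> 0" by simp
    ultimately show ?thesis by (simp only: mult_cancel_right2) blast
  qed
  then have "exp a ^ span_d (pmf P) = 1" unfolding span_d_def by (rule power_Gcd_eq_1)
  moreover have "exp a ^ span_d (pmf P) = exp (\<i> * of_real (Im a * real (span_d (pmf P))))"
  proof -
    have "a = \<i> * of_real (Im a)" using a(1) by (simp add: complex_eq_iff)
    have "exp a ^ span_d (pmf P) = exp (of_nat (span_d (pmf P)) * a)"
      by (simp add: exp_of_nat_mult)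
    also have "of_nat (span_d (pmf P)) * a = \<i> * of_real (Im a * real (span_d (pmf P)))"
      by (subst (1) \<open>a = _\<close>) (simp add: mult_ac)
    finally show ?thesis .
  qed
  moreover have "0 < \<bar>Im a * real (span_d (pmf P))\<bar>" "\<bar>Im a * real (span_d (pmf P))\<bar> \<le> pi"
    using a d by (auto simp: abs_mult field_simps)
  then have "exp (\<i> * of_real (Im a * real (span_d (pmf P)))) \<noteq> 1" by (rule exp_i_neq_1)
  ultimately show False by simp
qed

section \<open>Bounds on the iterates along the bands \<open>J\<^sub>j\<close>\<close>

lemma pmf_min_mu_pos: "pmf P (min_mu (pmf P)) > 0"
proof -
  obtain j where "j \<in> set_pmf P" using set_pmf_not_empty[of P] by blast
  then have "pmf P j > 0" by (rule pmf_positive)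
  then show ?thesis unfolding min_mu_def by (rule LeastI[where P = "\<lambda>j. 0 < pmf P j"])
qed

lemma min_mu_le: "pmf P j > 0 \<Longrightarrow> min_mu (pmf P) \<le> j"
  unfolding min_mu_def by (rule Least_le[where P = "\<lambda>j. 0 < pmf P j"])

lemma min_mu_pos: "pmf P 0 = 0 \<Longrightarrow> 0 < min_mu (pmf P)"
  using pmf_min_mu_pos[of P] by (cases "min_mu (pmf P)") auto

lemma span_d_pos:
  assumes "\<And>j. pmf P j \<noteq> 1"
  shows "span_d (pmf P) > 0"
proof -
  define \<mu> where "\<mu> = min_mu (pmf P)"
  have "\<not> set_pmf P \<subseteq> {\<mu>}"
  proof
    assume "set_pmf P \<subseteq> {\<mu>}"
    then have "P = return_pmf \<mu>" by (simp add: set_pmf_subset_singleton)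
    with assms[of \<mu>] show False by simp
  qed
  then obtain k where "k \<in> set_pmf P" "k \<noteq> \<mu>" by blast
  then have "\<mu> < k" "0 < pmf P k * pmf P \<mu>"
    using min_mu_le[of P k] pmf_min_mu_pos[of P] pmf_positive[of k P] by (simp_all add: \<mu>_def)
  then have "k - \<mu> \<in> {j - l | j l. l < j \<and> pmf P j * pmf P l > 0}"
    by (intro CollectI exI[of _ k] exI[of _ \<mu>]) simp
  moreover have "k - \<mu> \<noteq> 0" using \<open>\<mu> < k\<close> by simp
  ultimately have "\<not> {j - l | j l. l < j \<and> pmf P j * pmf P l > 0} \<subseteq> {0}" by (meson singletonD subsetD)
  then show ?thesis unfolding span_d_def by (simp only: Gcd_0_iff[symmetric] gr0I)
qed

lemma norm_funpow_gf_le_norm_gf: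
  assumes "pmf P 0 = 0" "norm w \<le> 1" "1 \<le> j"
  shows "norm ((gf (pmf P) ^^ j) w) \<le> norm (gf (pmf P) w)"
proof -
  obtain i where j: "j = Suc i" using assms(3) by (cases j) auto
  have mu: "1 \<le> k" if "pmf P k > 0" for k using that assms(1) by (cases k) auto
  have g: "norm (gf (pmf P) w) \<le> 1" using assms(2) by (rule norm_gf_le_1)
  have "norm ((gf (pmf P) ^^ j) w) = norm ((gf (pmf P) ^^ i) (gf (pmf P) w))"
    by (simp only: j funpow_Suc_right comp_def)
  also have "\<dots> \<le> (real_pgf P ^^ i) (norm (gf (pmf P) w))"
    by (rule norm_funpow_gf_le[OF order_refl g])
  also have "\<dots> \<le> norm (gf (pmf P) w) ^ (1 ^ i)"
    by (rule funpow_real_pgf_le_power[OF mu norm_ge_zero g])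
  finally show ?thesis by simp
qed

lemma gf_exp_eq_lf_transform:
  assumes "Re b \<le> 0"
  shows "gf (pmf P) (exp b) = lf_transform (measure_pmf P) real b"
proof -
  have "norm (exp b) \<le> 1" using assms by simp
  then show ?thesis
    unfolding gf_pmf_eq_integral[OF \<open>norm (exp b) \<le> 1\<close>] lf_transform_def
    by (intro Bochner_Integration.integral_cong) (simp_all add: exp_of_nat_mult[symmetric] mult.commute)
qed

locale gw_limit = prob_space M for M :: "'a measure" +
  fixes P :: "nat pmf" and \<xi> :: "nat \<Rightarrow> nat \<Rightarrow> 'a \<Rightarrow> nat"
    and c :: "nat \<Rightarrow> real" and m :: real and W :: "'a \<Rightarrow> real"
  assumes xi_indep: "indep_vars (\<lambda>_. count_space UNIV) (\<lambda>(n, k). \<xi> n k) UNIV"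
    and xi_distr: "\<And>n k. distr M (count_space UNIV) (\<xi> n k) = measure_pmf P"
    and nondeg: "\<And>j. pmf P j \<noteq> 1"
    and p0: "pmf P 0 = 0"
    and c0: "c 0 = 1"
    and c_incr: "\<And>n. c n < c (Suc n)"
    and c_le: "\<And>n. c (Suc n) \<le> m * c n"
    and W_meas: "W \<in> borel_measurable M"
    and W_lim: "AE \<omega> in M. (\<lambda>n. real (GW \<xi> n \<omega>) / c n) \<longlonglongrightarrow> W \<omega>"
    and W_nondeg: "\<not> (\<exists>a. AE \<omega> in M. W \<omega> = a)"
    and W_ac: "\<And>A. A \<in> sets borel \<Longrightarrow> A \<subseteq> {0<..} \<Longrightarrow> emeasure lborel A = 0 \<Longrightarrow>
                 emeasure M (W -` A \<inter> space M) = 0"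
begin

lemma c_mono: "i \<le> j \<Longrightarrow> c i \<le> c j"
  by (rule lift_Suc_mono_le) (use c_incr less_imp_le in auto)

lemma c_ge_1: "1 \<le> c j"
  using c_mono[of 0 j] c0 by simp

lemma c_pos: "0 < c j"
  using c_ge_1[of j] by linarith

lemma xi_measurable: "(\<lambda>(n, k). \<xi> n k) i \<in> measurable M (count_space UNIV)"
  using xi_indep unfolding indep_vars_def by blast

lemma integral_power_GW:
  assumes "norm w \<le> 1"
  shows "(\<integral>\<omega>. w ^ GW \<xi> n \<omega> \<partial>M) = (gf (pmf P) ^^ n) w"
proof -
  have pgf: "(\<integral>\<omega>. w ^ (\<lambda>(n, k). \<xi> n k) i \<omega> \<partial>M) = gf (pmf P) w" if "norm w \<le> 1" for i w
  proof -
    obtain a b where i: "i = (a, b)" by (cases i)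
    have "(\<integral>\<omega>. w ^ \<xi> a b \<omega> \<partial>M) = (\<integral>x. w ^ x \<partial>distr M (count_space UNIV) (\<xi> a b))"
      using xi_measurable[of i] by (subst integral_distr) (auto simp: i)
    then show ?thesis by (simp add: i xi_distr gf_pmf_eq_integral[OF that])
  qed
  from integral_power_gw_size[OF xi_indep pgf norm_gf_le_1 assms] show ?thesis
    by (simp add: GW_eq_gw_size case_prod_beta')
qed

lemma measurable_GW: "(\<lambda>\<omega>. GW \<xi> n \<omega>) \<in> measurable M (count_space UNIV)"
  using measurable_gw_size_array[OF xi_measurable, of n] by (simp add: GW_eq_gw_size case_prod_beta')

lemma not_AE_W_le_0: "\<not> (AE \<omega> in M. W \<omega> \<le> 0)"
proof
  have "AE \<omega> in M. 0 \<le> W \<omega>"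
    using W_lim
  proof eventually_elim
    case (elim \<omega>)
    show ?case
      by (rule LIMSEQ_le_const[OF elim]) (use c_pos in \<open>auto intro!: exI[of _ 0] divide_nonneg_pos\<close>)
  qed
  moreover assume "AE \<omega> in M. W \<omega> \<le> 0"
  ultimately have "AE \<omega> in M. W \<omega> = 0" by eventually_elim simp
  with W_nondeg show False by blast
qed

lemma funpow_gf_exp_eq_lf_transform:
  assumes "Re b \<le> 0"
  shows "(gf (pmf P) ^^ j) (exp b) = lf_transform M (\<lambda>\<omega>. real (GW \<xi> j \<omega>) / c j) (of_real (c j) * b)"
proof -
  have "(gf (pmf P) ^^ j) (exp b) = (\<integral>\<omega>. exp b ^ GW \<xi> j \<omega> \<partial>M)"
    using assms by (simp add: integral_power_GW)
  also have "\<dots> = lf_transform M (\<lambda>\<omega>. real (GW \<xi> j \<omega>) / c j) (of_real (c j) * b)"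
    unfolding lf_transform_def using c_ge_1[of j]
    by (intro Bochner_Integration.integral_cong) (simp_all add: exp_of_nat_mult[symmetric] field_simps)
  finally show ?thesis .
qed

lemma band_bound_eventually:
  "\<exists>J \<theta>. \<theta> < 1 \<and> (\<forall>j\<ge>J. \<forall>b. 1 \<le> j \<longrightarrow> Re b \<le> 0 \<longrightarrow>
      pi / (span_d (pmf P) * c j) \<le> \<bar>Im b\<bar> \<longrightarrow> \<bar>Im b\<bar> \<le> pi / (span_d (pmf P) * c (j - 1)) \<longrightarrow>
      norm ((gf (pmf P) ^^ j) (exp b)) \<le> \<theta>)"
proof -
  define d where "d = real (span_d (pmf P))"
  have "d > 0" using span_d_pos[OF nondeg] by (simp add: d_def)
  \<comment> \<open>rescaled by \<open>c\<^sub>j\<close>, the band \<open>J\<^sub>j\<close> falls into the fixed band \<open>\<pi>/d \<le> \<bar>s\<bar> \<le> m\<pi>/d\<close>\<close>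
  let ?lo = "pi / d" and ?hi = "m * pi / d"
  have "1 < m" using c_incr[of 0] c_le[of 0] c0 by simp
  with \<open>d > 0\<close> have lo: "0 < ?lo" "?lo \<le> ?hi" by (auto simp: divide_right_mono)
  let ?X = "\<lambda>j \<omega>. real (GW \<xi> j \<omega>) / c j"
  have X: "?X j \<in> borel_measurable M" for j
    using measurable_compose[OF measurable_GW borel_measurable_count_space[of "\<lambda>N. real N / c j"]]
    by simp
  have "norm (lf_transform M W a) < 1" if "Re a = 0" "?lo \<le> \<bar>Im a\<bar>" for a
    using that lo by (intro norm_lf_transform_imag_lt_1[OF W_meas W_ac not_AE_W_le_0]) auto
  then obtain J \<theta> where "\<theta> < 1" and \<theta>: "\<And>j a. J \<le> j \<Longrightarrow> Re a \<le> 0 \<Longrightarrow> ?lo \<le> \<bar>Im a\<bar> \<Longrightarrow> \<bar>Im a\<bar> \<le> ?hi \<Longrightarrow>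
      norm (lf_transform M (?X j) a) \<le> \<theta>"
    using lf_transform_band_bound_eventually[OF X W_meas W_lim not_AE_W_le_0 lo] by blast
  have "norm ((gf (pmf P) ^^ j) (exp b)) \<le> \<theta>"
    if "J \<le> j" "1 \<le> j" "Re b \<le> 0" and t: "pi / (d * c j) \<le> \<bar>Im b\<bar>" "\<bar>Im b\<bar> \<le> pi / (d * c (j - 1))" for j b
  proof -
    have cj: "0 < c j" "0 < c (j - 1)" "c j \<le> m * c (j - 1)"
      using c_ge_1[of j] c_ge_1[of "j - 1"] c_le[of "j - 1"] \<open>1 \<le> j\<close> by auto
    have "?lo \<le> c j * \<bar>Im b\<bar>"
      using t(1) cj \<open>d > 0\<close> by (simp add: field_simps)
    moreover have "c j * \<bar>Im b\<bar> \<le> (m * c (j - 1)) * (pi / (d * c (j - 1)))"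
      using t(2) cj by (intro mult_mono) auto
    ultimately have "?lo \<le> \<bar>Im (of_real (c j) * b)\<bar>" "\<bar>Im (of_real (c j) * b)\<bar> \<le> ?hi"
      using cj \<open>d > 0\<close> by (auto simp: abs_mult)
    moreover have "Re (of_real (c j) * b) \<le> 0" using cj \<open>Re b \<le> 0\<close> by (simp add: mult_nonneg_nonpos)
    ultimately show ?thesis
      using \<theta>[OF \<open>J \<le> j\<close>] funpow_gf_exp_eq_lf_transform[OF \<open>Re b \<le> 0\<close>, of j] by simp
  qed
  with \<open>\<theta> < 1\<close> show ?thesis unfolding d_def by blast
qed

lemma band_bound_initial:
  "\<exists>\<theta> < 1. \<forall>j b. 1 \<le> j \<longrightarrow> j \<le> J \<longrightarrow> Re b \<le> 0 \<longrightarrow>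
      pi / (span_d (pmf P) * c j) \<le> \<bar>Im b\<bar> \<longrightarrow> \<bar>Im b\<bar> \<le> pi / (span_d (pmf P) * c (j - 1)) \<longrightarrow>
      norm ((gf (pmf P) ^^ j) (exp b)) \<le> \<theta>"
proof -
  define d where "d = real (span_d (pmf P))"
  have "d > 0" using span_d_pos[OF nondeg] by (simp add: d_def)
  let ?lo = "pi / (d * c J)" and ?hi = "pi / d"
  have lo: "0 < ?lo" "?lo \<le> ?hi"
    using \<open>d > 0\<close> c_ge_1[of J] by (auto intro!: divide_left_mono simp: mult_le_cancel_left1)
  have "\<not> (AE j in measure_pmf P. real j \<le> 0)"
    using pmf_min_mu_pos[of P] min_mu_pos[OF p0] by (auto simp: AE_measure_pmf_iff set_pmf_iff)
  moreover have "norm (lf_transform (measure_pmf P) real a) < 1"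
    if "Re a = 0" "?lo \<le> \<bar>Im a\<bar>" "\<bar>Im a\<bar> \<le> ?hi" for a
    using that lo span_d_pos[OF nondeg] by (intro norm_lf_transform_pmf_imag_lt_1) (auto simp: d_def)
  ultimately obtain \<theta> where "\<theta> < 1" and \<theta>: "\<And>a. Re a \<le> 0 \<Longrightarrow> ?lo \<le> \<bar>Im a\<bar> \<Longrightarrow> \<bar>Im a\<bar> \<le> ?hi \<Longrightarrow>
      norm (lf_transform (measure_pmf P) real a) \<le> \<theta>"
    using measure_pmf.lf_transform_band_bound[of real P, OF _ _ lo] by auto
  have "norm ((gf (pmf P) ^^ j) (exp b)) \<le> \<theta>"
    if "1 \<le> j" "j \<le> J" "Re b \<le> 0" and t: "pi / (d * c j) \<le> \<bar>Im b\<bar>" "\<bar>Im b\<bar> \<le> pi / (d * c (j - 1))" for j b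
  proof -
    have "?lo \<le> pi / (d * c j)"
      using \<open>d > 0\<close> c_ge_1[of j] c_mono[OF \<open>j \<le> J\<close>] by (intro divide_left_mono mult_left_mono) auto
    moreover have "pi / (d * c (j - 1)) \<le> ?hi"
      using \<open>d > 0\<close> c_ge_1[of "j - 1"] by (intro divide_left_mono) (auto simp: mult_le_cancel_left1)
    ultimately have "norm (lf_transform (measure_pmf P) real b) \<le> \<theta>"
      using t \<open>Re b \<le> 0\<close> by (intro \<theta>) auto
    then show ?thesis
      using norm_funpow_gf_le_norm_gf[OF p0 _ \<open>1 \<le> j\<close>, of "exp b"] \<open>Re b \<le> 0\<close>
      by (simp add: gf_exp_eq_lf_transform)
  qed
  with \<open>\<theta> < 1\<close> show ?thesis unfolding d_def by blast
qed

lemma band_bound: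
  "\<exists>\<theta>. 0 < \<theta> \<and> \<theta> < 1 \<and> (\<forall>j b. 1 \<le> j \<longrightarrow> Re b \<le> 0 \<longrightarrow>
      pi / (span_d (pmf P) * c j) \<le> \<bar>Im b\<bar> \<longrightarrow> \<bar>Im b\<bar> \<le> pi / (span_d (pmf P) * c (j - 1)) \<longrightarrow>
      norm ((gf (pmf P) ^^ j) (exp b)) \<le> \<theta>)"
proof -
  obtain J \<theta>1 where "\<theta>1 < 1" and \<theta>1: "\<forall>j\<ge>J. \<forall>b. 1 \<le> j \<longrightarrow> Re b \<le> 0 \<longrightarrow>
      pi / (span_d (pmf P) * c j) \<le> \<bar>Im b\<bar> \<longrightarrow> \<bar>Im b\<bar> \<le> pi / (span_d (pmf P) * c (j - 1)) \<longrightarrow>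
      norm ((gf (pmf P) ^^ j) (exp b)) \<le> \<theta>1"
    using band_bound_eventually by blast
  obtain \<theta>2 where "\<theta>2 < 1" and \<theta>2: "\<forall>j b. 1 \<le> j \<longrightarrow> j \<le> J \<longrightarrow> Re b \<le> 0 \<longrightarrow>
      pi / (span_d (pmf P) * c j) \<le> \<bar>Im b\<bar> \<longrightarrow> \<bar>Im b\<bar> \<le> pi / (span_d (pmf P) * c (j - 1)) \<longrightarrow>
      norm ((gf (pmf P) ^^ j) (exp b)) \<le> \<theta>2"
    using band_bound_initial by blast
  show ?thesis
  proof (intro exI[of _ "max (max \<theta>1 \<theta>2) (1/2)"] conjI allI impI)
    fix j b
    assume j: "1 \<le> j" "Re b \<le> 0" "pi / (span_d (pmf P) * c j) \<le> \<bar>Im b\<bar>"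
      "\<bar>Im b\<bar> \<le> pi / (span_d (pmf P) * c (j - 1))"
    show "norm ((gf (pmf P) ^^ j) (exp b)) \<le> max (max \<theta>1 \<theta>2) (1/2)"
    proof (cases "J \<le> j")
      case True
      from \<theta>1[rule_format, OF True j] have "norm ((gf (pmf P) ^^ j) (exp b)) \<le> \<theta>1" .
      then show ?thesis by simp
    next
      case False
      then have "j \<le> J" by simp
      from \<theta>2[rule_format, OF j(1) this j(2-)] have "norm ((gf (pmf P) ^^ j) (exp b)) \<le> \<theta>2" .
      then show ?thesis by simp
    qed
  qed (use \<open>\<theta>1 < 1\<close> \<open>\<theta>2 < 1\<close> in auto)
qed

lemma band_bound_iterates:
  "\<exists>\<theta>. 0 < \<theta> \<and> \<theta> < 1 \<and> (\<forall>n j b. 1 \<le> j \<longrightarrow> j \<le> n \<longrightarrow> Re b \<le> 0 \<longrightarrow>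
      pi / (span_d (pmf P) * c j) \<le> \<bar>Im b\<bar> \<longrightarrow> \<bar>Im b\<bar> \<le> pi / (span_d (pmf P) * c (j - 1)) \<longrightarrow>
      norm ((gf (pmf P) ^^ n) (exp b)) \<le> (real_pgf P ^^ (n - j)) \<theta>)"
proof -
  obtain \<theta> where \<theta>: "0 < \<theta>" "\<theta> < 1" and band: "\<And>j b. 1 \<le> j \<Longrightarrow> Re b \<le> 0 \<Longrightarrow>
      pi / (span_d (pmf P) * c j) \<le> \<bar>Im b\<bar> \<Longrightarrow> \<bar>Im b\<bar> \<le> pi / (span_d (pmf P) * c (j - 1)) \<Longrightarrow>
      norm ((gf (pmf P) ^^ j) (exp b)) \<le> \<theta>"
    using band_bound by blast
  have "norm ((gf (pmf P) ^^ n) (exp b)) \<le> (real_pgf P ^^ (n - j)) \<theta>"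
    if "1 \<le> j" "j \<le> n" "Re b \<le> 0" "pi / (span_d (pmf P) * c j) \<le> \<bar>Im b\<bar>"
      "\<bar>Im b\<bar> \<le> pi / (span_d (pmf P) * c (j - 1))" for n j b
  proof -
    have "(gf (pmf P) ^^ ((n - j) + j)) (exp b) = (gf (pmf P) ^^ (n - j)) ((gf (pmf P) ^^ j) (exp b))"
      by (simp only: funpow_add comp_def)
    then have "(gf (pmf P) ^^ n) (exp b) = (gf (pmf P) ^^ (n - j)) ((gf (pmf P) ^^ j) (exp b))"
      using \<open>j \<le> n\<close> by simp
    then show ?thesis
      using norm_funpow_gf_le[OF band[OF that(1,3-)] less_imp_le[OF \<theta>(2)]] by simp
  qed
  with \<theta> show ?thesis by blast
qed

end
theorem mainTheorem4:
  fixes P :: "nat pmf" and M :: "'a measure" and \<xi> :: "nat \<Rightarrow> nat \<Rightarrow> 'a \<Rightarrow> nat"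
    and W :: "'a \<Rightarrow> real" and c :: "nat \<Rightarrow> real" and L :: "real \<Rightarrow> real" and m :: real
  defines "p \<equiv> pmf P"
  assumes nondeg: "\<And>j. p j \<noteq> 1"
    and mean_fin: "summable (\<lambda>j. p j * real j)"
    and m_def: "m = (\<Sum>j. p j * real j)"
    and m_gt1: "m > 1"
    and p0: "p 0 = 0"
    and M: "prob_space M"
    and xi_indep: "prob_space.indep_vars M (\<lambda>_. count_space UNIV) (\<lambda>(n, k). \<xi> n k) UNIV"
    and xi_distr: "\<And>n k. distr M (count_space UNIV) (\<xi> n k) = measure_pmf P"
    and c_pos: "\<And>n. c n > 0"
    and c0: "c 0 = 1"
    and c_incr: "\<And>n. c n < c (Suc n)"
    and c_le: "\<And>n. c (Suc n) \<le> m * c n"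
    and L_sv: "slowly_varying L"
    and c_L: "\<And>n. c n = m ^ n * L (m ^ n)"
    and c_LlogL: "summable (\<lambda>j. p j * real j * ln (real j)) \<Longrightarrow> (\<forall>n. c n = m ^ n)"
    and W_meas: "W \<in> borel_measurable M"
    and W_lim: "AE \<omega> in M. (\<lambda>n. real (GW \<xi> n \<omega>) / c n) \<longlonglongrightarrow> W \<omega>"
    and W_nondeg: "\<not> (\<exists>a. AE \<omega> in M. W \<omega> = a)"
    and W_ac: "\<And>A. A \<in> sets borel \<Longrightarrow> A \<subseteq> {0<..} \<Longrightarrow> emeasure lborel A = 0 \<Longrightarrow>
                 emeasure M (W -` A \<inter> space M) = 0"
  shows "\<exists>A::real. \<exists>\<theta>::real. A > 0 \<and> 0 < \<theta> \<and> \<theta> < 1 \<and>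
    (\<forall>n j. \<forall>h::real. \<forall>t::real. 1 \<le> n \<longrightarrow> 1 \<le> j \<longrightarrow> j \<le> n \<longrightarrow> 0 \<le> h \<longrightarrow>
        pi / (real (span_d p) * c j) \<le> \<bar>t\<bar> \<longrightarrow> \<bar>t\<bar> \<le> pi / (real (span_d p) * c (j - 1)) \<longrightarrow>
      (let z = (gf p ^^ n) (exp (complex_of_real (- h / c n) + \<i> * complex_of_real t)) in
        (p 0 + p 1 > 0 \<longrightarrow> cmod z \<le> A * p 1 ^ (n - j + 1)) \<and>
        cmod z \<le> \<theta> ^ (min_mu p ^ (n - j + 1))))"
proof -
  interpret gw_limit M P \<xi> c m W
    using M xi_indep xi_distr nondeg p0 c0 c_incr c_le W_meas W_lim W_nondeg W_ac
    unfolding gw_limit_def gw_limit_axioms_def p_def by blast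
  define \<mu> where "\<mu> = min_mu p"
  have \<mu>_le: "\<mu> \<le> j" if "p j > 0" for j
    using min_mu_le[of P j] that by (simp add: \<mu>_def p_def)
  have "1 \<le> \<mu>" using min_mu_pos[of P] p0 by (simp add: \<mu>_def p_def)
  obtain \<theta>1 where \<theta>1: "0 < \<theta>1" "\<theta>1 < 1" and iterates: "\<And>n j b. 1 \<le> j \<Longrightarrow> j \<le> n \<Longrightarrow> Re b \<le> 0 \<Longrightarrow>
      pi / (span_d p * c j) \<le> \<bar>Im b\<bar> \<Longrightarrow> \<bar>Im b\<bar> \<le> pi / (span_d p * c (j - 1)) \<Longrightarrow>
      norm ((gf p ^^ n) (exp b)) \<le> (real_pgf P ^^ (n - j)) \<theta>1"
    using band_bound_iterates unfolding p_def by blast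
  obtain A where "A > 0" and schroeder: "\<And>N. p 1 > 0 \<Longrightarrow> (real_pgf P ^^ N) \<theta>1 \<le> A * p 1 ^ Suc N"
    using funpow_real_pgf_schroeder[of P \<theta>1] p0 nondeg[of 1] pmf_le_1[of P 1] \<theta>1
    by (cases "p 1 > 0") (auto simp: p_def intro: exI[of _ 1])
  define \<theta> where "\<theta> = root \<mu> \<theta>1"
  have \<theta>: "0 < \<theta>" "\<theta> < 1" "\<theta> ^ \<mu> = \<theta>1"
    using \<theta>1 \<open>1 \<le> \<mu>\<close> by (auto simp: \<theta>_def intro: real_root_gt_zero)
  have power: "(real_pgf P ^^ N) \<theta>1 \<le> \<theta> ^ (\<mu> ^ Suc N)" for N
    using funpow_real_pgf_le_power[of P \<mu> \<theta>1 N] \<mu>_le \<theta>1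
    by (simp add: p_def \<theta>(3)[symmetric] power_mult)
  show ?thesis
  proof (rule exI[of _ A], rule exI[of _ \<theta>], intro conjI allI impI)
    fix n j :: nat and h t :: real
    assume "1 \<le> n" "1 \<le> j" "j \<le> n" "0 \<le> h"
      and t: "pi / (span_d p * c j) \<le> \<bar>t\<bar>" "\<bar>t\<bar> \<le> pi / (span_d p * c (j - 1))"
    define b where "b = complex_of_real (- h / c n) + \<i> * complex_of_real t"
    have "Re b \<le> 0" "Im b = t" using \<open>0 \<le> h\<close> c_pos[of n] by (simp_all add: b_def)
    with iterates[OF \<open>1 \<le> j\<close> \<open>j \<le> n\<close>] t
    have "norm ((gf p ^^ n) (exp b)) \<le> (real_pgf P ^^ (n - j)) \<theta>1" by simp
    with schroeder[of "n - j"] power[of "n - j"] p0 \<open>j \<le> n\<close>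
    show "let z = (gf p ^^ n) (exp (complex_of_real (- h / c n) + \<i> * complex_of_real t)) in
        (p 0 + p 1 > 0 \<longrightarrow> cmod z \<le> A * p 1 ^ (n - j + 1)) \<and> cmod z \<le> \<theta> ^ (min_mu p ^ (n - j + 1))"
      unfolding Let_def b_def[symmetric] by (auto simp: \<mu>_def p_def intro: order_trans)
  qed (use \<open>A > 0\<close> \<theta> in auto)
qed
end
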